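(* Let $\kappa$ be a field, $r,k\ge1$, $s_1,\dots,s_k\ge0$ integers, $\Gamma$ the complete bipartite supernova quiver with these parameters and $\boldsymbol\mu=(\mu^1,\dots,\mu^k)$ a $k$-tuple of nonzero partitions, $\mu^i=(\mu^i_1\ge\cdots\ge\mu^i_{s_i+1}\ge0)$, with $r\ge|\mu^i|+\mu^i_1$ for all $i$. Let $\boldsymbol\varphi$ be an indecomposable representation of $\Gamma$ over $\kappa$ of dimension vector $\mathbf{v}_{\boldsymbol\mu}$. Then (i) the maps $\varphi_\gamma$, for $\gamma$ running over the arrows $(i;j)\to(i;j-1)$ ($1\le i\le k$, $1\le j\le s_i$) of the long legs, are all injective; and (ii) for each $i=1,\dots,k$, the images of the maps $\varphi_{(l)\to(i;0)}$, $l=1,\dots,r$, span $V^{\boldsymbol\varphi}_{(i;0)}$.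
   Context: $\Gamma$ has vertices $(l)$, $l=1,\dots,r$, and $(i;j)$, $i=1,\dots,k$, $j=0,\dots,s_i$; arrows: one arrow $(l)\to(i;0)$ for each $l,i$ and one arrow $(i;j)\to(i;j-1)$ for $1\le j\le s_i$. $\mathbf{v}_{\boldsymbol\mu}$: $v_{(l)}=1$, $v_{(i;0)}=|\mu^i|$, $v_{(i;j)}=|\mu^i|-\sum_{f=1}^j\mu^i_f$. A representation $\boldsymbol\varphi$ consists of $\kappa$-vector spaces $V^{\boldsymbol\varphi}_a$ ($a$ a vertex) of dimensions $v_a$ and linear maps $\varphi_\gamma:V^{\boldsymbol\varphi}_{t(\gamma)}\to V^{\boldsymbol\varphi}_{h(\gamma)}$ for each arrow $\gamma$; it is indecomposable if it is nonzero and not isomorphic to a direct sum of two nonzero representations. *)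

theory Defs
  imports "Jordan_Normal_Form.Matrix"
begin

text \<open>Finite-dimensional representations of a quiver over a field 'k, realised on the
coordinate spaces 'k^(d a) (d the dimension vector); the linear map attached to an arrow
is given by its matrix.\<close>

definition is_subspace :: "nat \<Rightarrow> 'k::field vec set \<Rightarrow> bool" where
  "is_subspace n U \<longleftrightarrow> U \<subseteq> carrier_vec n \<and> 0\<^sub>v n \<in> U \<and>
     (\<forall>x\<in>U. \<forall>y\<in>U. x + y \<in> U) \<and> (\<forall>c. \<forall>x\<in>U. c \<cdot>\<^sub>v x \<in> U)"

definition spans :: "nat \<Rightarrow> 'k::field vec set set \<Rightarrow> bool" where
  "spans n Ss \<longleftrightarrow> (\<forall>U. is_subspace n U \<and> \<Union>Ss \<subseteq> U \<longrightarrow> carrier_vec n \<subseteq> U)"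

definition is_rep :: "'v set \<Rightarrow> 'e set \<Rightarrow> ('e \<Rightarrow> 'v) \<Rightarrow> ('e \<Rightarrow> 'v) \<Rightarrow> ('v \<Rightarrow> nat)
    \<Rightarrow> ('e \<Rightarrow> 'k::field mat) \<Rightarrow> bool" where
  "is_rep Vs As tlf hdf d phi \<longleftrightarrow>
     (\<forall>g\<in>As. tlf g \<in> Vs \<and> hdf g \<in> Vs \<and> phi g \<in> carrier_mat (d (hdf g)) (d (tlf g)))"

text \<open>A representation is decomposable iff it is (isomorphic to) the direct sum of two
nonzero subrepresentations: at every vertex the space splits as an internal direct sum
U a + W a, both families being stable under all arrow maps, and both nonzero.\<close>
definition decomposable :: "'v set \<Rightarrow> 'e set \<Rightarrow> ('e \<Rightarrow> 'v) \<Rightarrow> ('e \<Rightarrow> 'v) \<Rightarrow> ('v \<Rightarrow> nat)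
    \<Rightarrow> ('e \<Rightarrow> 'k::field mat) \<Rightarrow> bool" where
  "decomposable Vs As tlf hdf d phi \<longleftrightarrow>
     (\<exists>U W. (\<forall>a\<in>Vs. is_subspace (d a) (U a) \<and> is_subspace (d a) (W a) \<and>
                    U a \<inter> W a = {0\<^sub>v (d a)} \<and>
                    (\<forall>x\<in>carrier_vec (d a). \<exists>u\<in>U a. \<exists>w\<in>W a. x = u + w)) \<and>
            (\<forall>g\<in>As. (\<forall>x\<in>U (tlf g). phi g *\<^sub>v x \<in> U (hdf g)) \<and>
                     (\<forall>x\<in>W (tlf g). phi g *\<^sub>v x \<in> W (hdf g))) \<and>
            (\<exists>a\<in>Vs. U a \<noteq> {0\<^sub>v (d a)}) \<and> (\<exists>a\<in>Vs. W a \<noteq> {0\<^sub>v (d a)}))"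

definition indecomposable :: "'v set \<Rightarrow> 'e set \<Rightarrow> ('e \<Rightarrow> 'v) \<Rightarrow> ('e \<Rightarrow> 'v) \<Rightarrow> ('v \<Rightarrow> nat)
    \<Rightarrow> ('e \<Rightarrow> 'k::field mat) \<Rightarrow> bool" where
  "indecomposable Vs As tlf hdf d phi \<longleftrightarrow>
     (\<exists>a\<in>Vs. d a > 0) \<and> \<not> decomposable Vs As tlf hdf d phi"

text \<open>The complete bipartite supernova quiver: vertices (l) = SV l and (i;j) = LV i j,
arrows (l)->(i;0) = Star l i and (i;j)->(i;j-1) = Leg i j.\<close>
datatype sn_vertex = SV nat | LV nat nat
datatype sn_arrow = Star nat nat | Leg nat nat

definition sn_vertices :: "nat \<Rightarrow> nat \<Rightarrow> (nat \<Rightarrow> nat) \<Rightarrow> sn_vertex set" where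
  "sn_vertices r k s = {SV l | l. 1 \<le> l \<and> l \<le> r} \<union> {LV i j | i j. 1 \<le> i \<and> i \<le> k \<and> j \<le> s i}"

definition sn_arrows :: "nat \<Rightarrow> nat \<Rightarrow> (nat \<Rightarrow> nat) \<Rightarrow> sn_arrow set" where
  "sn_arrows r k s = {Star l i | l i. 1 \<le> l \<and> l \<le> r \<and> 1 \<le> i \<and> i \<le> k}
     \<union> {Leg i j | i j. 1 \<le> i \<and> i \<le> k \<and> 1 \<le> j \<and> j \<le> s i}"

fun sn_tail :: "sn_arrow \<Rightarrow> sn_vertex" where
  "sn_tail (Star l i) = SV l"
| "sn_tail (Leg i j) = LV i j"

fun sn_head :: "sn_arrow \<Rightarrow> sn_vertex" where
  "sn_head (Star l i) = LV i 0"
| "sn_head (Leg i j) = LV i (j - 1)"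

text \<open>mu i f = \<mu>^i_f for f = 1..s_i+1; |\<mu>^i| = sum of the parts.\<close>
definition psize :: "(nat \<Rightarrow> nat \<Rightarrow> nat) \<Rightarrow> (nat \<Rightarrow> nat) \<Rightarrow> nat \<Rightarrow> nat" where
  "psize mu s i = (\<Sum>f=1..s i + 1. mu i f)"

fun dimvec :: "(nat \<Rightarrow> nat \<Rightarrow> nat) \<Rightarrow> (nat \<Rightarrow> nat) \<Rightarrow> sn_vertex \<Rightarrow> nat" where
  "dimvec mu s (SV l) = 1"
| "dimvec mu s (LV i j) = psize mu s i - (\<Sum>f=1..j. mu i f)"

end

theory Submission
  imports Defs
begin

text \<open>If the arrow (i;m) \<rightarrow> (i;m-1) kills a nonzero vector, or the star images span only a proper
  subspace of V_(i;0), a string summand supported on a segment (i;m), ..., (i;t) of the i-th leg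
  splits off. Take t maximal such that some y in V_(i;t) is carried by the leg maps to a vector z
  in V_(i;m) witnessing the defect, and a linear form w on V_(i;m) with w z = 1 that vanishes on
  the image of V_(i;t+1) (resp. on the star images). The images of y along the leg span one
  summand; the kernels of w composed with the leg maps form a complement, which contains the
  one-dimensional spaces V_(l), so both summands are nonzero. Only dim V_(l) = 1 and r \<ge> 1 are
  used.\<close>

lemma mult_mat_zero_vec[simp]:
  "M \<in> carrier_mat n' n \<Longrightarrow> M *\<^sub>v 0\<^sub>v n = (0\<^sub>v n' :: 'k::field vec)"
  by (intro eq_vecI) auto

definition form_kernel :: "nat \<Rightarrow> 'k::field vec \<Rightarrow> 'k vec set" where
  "form_kernel n f = {x \<in> carrier_vec n. f \<bullet> x = 0}"

definition vec_multiples :: "'k::field vec \<Rightarrow> 'k vec set" where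
  "vec_multiples c = range (\<lambda>e. e \<cdot>\<^sub>v c)"

lemma zero_in_vec_multiples: "c \<in> carrier_vec n \<Longrightarrow> 0\<^sub>v n \<in> vec_multiples (c :: 'k::field vec)"
  unfolding vec_multiples_def by (intro range_eqI[of _ _ 0]) auto

lemma self_in_vec_multiples: "c \<in> vec_multiples (c :: 'k::field vec)"
  by (auto simp: vec_multiples_def intro: range_eqI[of _ _ 1])

lemma is_subspace_form_kernel:
  assumes "f \<in> carrier_vec n"
  shows "is_subspace n (form_kernel n (f :: 'k::field vec))"
  using assms by (auto simp: is_subspace_def form_kernel_def scalar_prod_add_distrib[of f n])

lemma is_subspace_vec_multiples:
  assumes "c \<in> carrier_vec n"
  shows "is_subspace n (vec_multiples (c :: 'k::field vec))"
  unfolding is_subspace_def vec_multiples_def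
proof (intro conjI ballI allI)
  show "0\<^sub>v n \<in> range (\<lambda>e. e \<cdot>\<^sub>v c)"
    using assms by (intro range_eqI[of _ _ 0]) auto
  fix x y assume "x \<in> range (\<lambda>e. e \<cdot>\<^sub>v c)" "y \<in> range (\<lambda>e. e \<cdot>\<^sub>v c)"
  then obtain a b where "x = a \<cdot>\<^sub>v c" "y = b \<cdot>\<^sub>v c" by auto
  with assms show "x + y \<in> range (\<lambda>e. e \<cdot>\<^sub>v c)"
    by (intro range_eqI[of _ _ "a + b"]) (simp add: add_smult_distrib_vec)
next
  fix e x assume "x \<in> range (\<lambda>e. e \<cdot>\<^sub>v c)"
  then obtain a where "x = a \<cdot>\<^sub>v c" by auto
  then show "e \<cdot>\<^sub>v x \<in> range (\<lambda>e. e \<cdot>\<^sub>v c)"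
    by (intro range_eqI[of _ _ "e * a"]) (simp add: smult_smult_assoc)
qed (use assms in auto)

lemma is_subspace_zero: "is_subspace n {0\<^sub>v n :: 'k::field vec}"
  unfolding is_subspace_def by auto

lemma is_subspace_mat_image:
  assumes "(M :: 'k::field mat) \<in> carrier_mat n' n"
  shows "is_subspace n' ((\<lambda>v. M *\<^sub>v v) ` carrier_vec n)"
  unfolding is_subspace_def
proof (intro conjI ballI allI)
  show "0\<^sub>v n' \<in> (\<lambda>v. M *\<^sub>v v) ` carrier_vec n"
    using assms by (intro image_eqI[of _ _ "0\<^sub>v n"]) auto
  fix x y assume "x \<in> (\<lambda>v. M *\<^sub>v v) ` carrier_vec n" "y \<in> (\<lambda>v. M *\<^sub>v v) ` carrier_vec n"
  then obtain a b where "x = M *\<^sub>v a" "y = M *\<^sub>v b" "a \<in> carrier_vec n" "b \<in> carrier_vec n"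
    by auto
  with assms show "x + y \<in> (\<lambda>v. M *\<^sub>v v) ` carrier_vec n"
    by (intro image_eqI[of _ _ "a + b"]) (auto simp: mult_add_distrib_mat_vec)
next
  fix e x assume "x \<in> (\<lambda>v. M *\<^sub>v v) ` carrier_vec n"
  then obtain a where "x = M *\<^sub>v a" "a \<in> carrier_vec n" by auto
  with assms show "e \<cdot>\<^sub>v x \<in> (\<lambda>v. M *\<^sub>v v) ` carrier_vec n"
    by (intro image_eqI[of _ _ "e \<cdot>\<^sub>v a"]) (auto simp: mult_mat_vec)
qed (use assms in auto)

text \<open>The degenerate case f = 0, c = 0 gives the trivial splitting of the whole space.\<close>
lemma form_kernel_vec_multiples_complementary:
  fixes f c :: "'k::field vec"
  assumes f: "f \<in> carrier_vec n" and c: "c \<in> carrier_vec n"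
    and fc: "f \<bullet> c = 1 \<or> f = 0\<^sub>v n \<and> c = 0\<^sub>v n"
  shows "form_kernel n f \<inter> vec_multiples c = {0\<^sub>v n}"
    and "\<forall>x\<in>carrier_vec n. \<exists>u\<in>form_kernel n f. \<exists>v\<in>vec_multiples c. x = u + v"
proof -
  have "e \<cdot>\<^sub>v c = 0\<^sub>v n" if "f \<bullet> (e \<cdot>\<^sub>v c) = 0" for e
    using fc that f c by auto
  then show "form_kernel n f \<inter> vec_multiples c = {0\<^sub>v n}"
    using f c by (auto simp: form_kernel_def vec_multiples_def intro: range_eqI[of _ _ 0])
  show "\<forall>x\<in>carrier_vec n. \<exists>u\<in>form_kernel n f. \<exists>v\<in>vec_multiples c. x = u + v"
  proof
    fix x :: "'k vec" assume x: "x \<in> carrier_vec n"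
    define e where "e = f \<bullet> x"
    have "f \<bullet> (x - e \<cdot>\<^sub>v c) = 0"
      using fc f c x by (auto simp: e_def scalar_prod_minus_distrib[of f n])
    moreover have "x = (x - e \<cdot>\<^sub>v c) + e \<cdot>\<^sub>v c"
      using x c by (auto intro!: eq_vecI)
    ultimately show "\<exists>u\<in>form_kernel n f. \<exists>v\<in>vec_multiples c. x = u + v"
      using x c unfolding form_kernel_def vec_multiples_def
      by (intro bexI[of _ "x - e \<cdot>\<^sub>v c"] bexI[of _ "e \<cdot>\<^sub>v c"]) auto
  qed
qed

lemma vCons_add:
  "v \<in> carrier_vec n \<Longrightarrow> w \<in> carrier_vec n \<Longrightarrow> vCons a v + vCons b w = vCons (a + b) (v + w)"
  by (auto intro!: eq_vecI simp: vec_index_vCons)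

lemma vCons_smult: "c \<cdot>\<^sub>v vCons a v = vCons (c * a) (c \<cdot>\<^sub>v v)"
  by (auto intro!: eq_vecI simp: vec_index_vCons)

lemma carrier_vec_SucE:
  assumes "u \<in> carrier_vec (Suc n)"
  obtains a v where "u = vCons a v" and "v \<in> carrier_vec n"
  using assms by (cases u) auto

lemma is_subspace_vCons_zero_slice:
  assumes "is_subspace (Suc n) (U :: 'k::field vec set)"
  shows "is_subspace n {v \<in> carrier_vec n. vCons 0 v \<in> U}"
proof -
  have "vCons 0 (x + y) = vCons 0 x + vCons 0 y" if "x \<in> carrier_vec n" "y \<in> carrier_vec n" for x y :: "'k vec"
    using that by (simp add: vCons_add)
  moreover have "vCons 0 (c \<cdot>\<^sub>v x) = c \<cdot>\<^sub>v vCons 0 x" for c and x :: "'k vec"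
    by (simp add: vCons_smult)
  ultimately show ?thesis
    using assms unfolding is_subspace_def by (auto simp: zero_vec_Suc[symmetric])
qed

lemma separating_form_pivot:
  fixes f w' :: "'k::field vec"
  assumes U: "is_subspace (Suc n) U" and e: "vCons 1 f \<in> U"
    and w': "w' \<in> carrier_vec n" "\<forall>v\<in>carrier_vec n. vCons 0 v \<in> U \<longrightarrow> w' \<bullet> v = 0"
    and u: "vCons b u \<in> U"
  shows "vCons (- (w' \<bullet> f)) w' \<bullet> vCons b u = 0"
proof -
  have f: "f \<in> carrier_vec n" and u_carrier: "u \<in> carrier_vec n"
    using U e u by (auto simp: is_subspace_def)
  have "vCons b u + (- b) \<cdot>\<^sub>v vCons 1 f \<in> U"
    using U e u unfolding is_subspace_def by blast
  moreover have "vCons b u + (- b) \<cdot>\<^sub>v vCons 1 f = vCons 0 (u - b \<cdot>\<^sub>v f)"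
    using f u_carrier by (auto intro!: eq_vecI simp: vec_index_vCons)
  ultimately have "w' \<bullet> (u - b \<cdot>\<^sub>v f) = 0"
    using w' f u_carrier by simp
  then show ?thesis
    using w' f u_carrier by (simp add: scalar_prod_minus_distrib[of _ n] algebra_simps)
qed

lemma subspace_without_pivot:
  assumes "is_subspace (Suc n) U" and "\<nexists>f. vCons 1 f \<in> U" and "vCons b u \<in> (U :: 'k::field vec set)"
  shows "b = 0"
proof (rule ccontr)
  assume "b \<noteq> 0"
  then have "(1 / b) \<cdot>\<^sub>v vCons b u = vCons 1 ((1 / b) \<cdot>\<^sub>v u)"
    by (simp add: vCons_smult)
  moreover have "(1 / b) \<cdot>\<^sub>v vCons b u \<in> U"
    using assms(1,3) unfolding is_subspace_def by blast
  ultimately have "vCons 1 ((1 / b) \<cdot>\<^sub>v u) \<in> U" by simp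
  then show False using assms(2) by blast
qed

text \<open>Either U contains a vector with first coordinate 1, a pivot for eliminating the first
  coordinate, or U lies in the hyperplane of first coordinate 0; both cases reduce to n - 1.\<close>
lemma exists_separating_form:
  fixes z :: "'k::field vec"
  assumes "is_subspace n U" and "z \<in> carrier_vec n" and "z \<notin> U"
  shows "\<exists>w\<in>carrier_vec n. w \<bullet> z = 1 \<and> (\<forall>u\<in>U. w \<bullet> u = 0)"
  using assms
proof (induction n arbitrary: U z)
  case 0
  then have "z = 0\<^sub>v 0" by (auto intro!: eq_vecI)
  with 0 show ?case by (auto simp: is_subspace_def)
next
  case (Suc n)
  note U = Suc.prems(1)
  define U' where "U' = {v \<in> carrier_vec n. vCons 0 v \<in> U}"
  have U': "is_subspace n U'"
    unfolding U'_def by (rule is_subspace_vCons_zero_slice[OF U])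
  obtain a z0 where z: "z = vCons a z0" and z0: "z0 \<in> carrier_vec n"
    using Suc.prems(2) by (rule carrier_vec_SucE)
  have in_U: "\<forall>u\<in>U. P u"
    if P: "\<And>b u. vCons b u \<in> U \<Longrightarrow> u \<in> carrier_vec n \<Longrightarrow> P (vCons b u)" for P
  proof
    fix u assume u: "u \<in> U"
    then have "u \<in> carrier_vec (Suc n)" using U by (auto simp: is_subspace_def)
    then obtain b v where "u = vCons b v" "v \<in> carrier_vec n" by (rule carrier_vec_SucE)
    then show "P u" using P u by simp
  qed
  show ?case
  proof (cases "\<exists>f. vCons 1 f \<in> U")
    case True
    then obtain f where e: "vCons 1 f \<in> U" by blast
    then have f: "f \<in> carrier_vec n" using U by (auto simp: is_subspace_def)
    have "vCons 0 (z0 - a \<cdot>\<^sub>v f) + a \<cdot>\<^sub>v vCons 1 f = z"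
      using z z0 f by (auto intro!: eq_vecI simp: vec_index_vCons)
    moreover have "vCons 0 v + a \<cdot>\<^sub>v vCons 1 f \<in> U" if "v \<in> U'" for v
      using U e that unfolding U'_def is_subspace_def by blast
    ultimately have "z0 - a \<cdot>\<^sub>v f \<notin> U'" using Suc.prems(3) by metis
    moreover have "z0 - a \<cdot>\<^sub>v f \<in> carrier_vec n" using z0 f by simp
    ultimately obtain w' where w': "w' \<in> carrier_vec n" "w' \<bullet> (z0 - a \<cdot>\<^sub>v f) = 1"
      and w'U': "\<forall>u\<in>U'. w' \<bullet> u = 0"
      using Suc.IH[OF U'] by blast
    have "vCons (- (w' \<bullet> f)) w' \<bullet> z = 1"
      using w' z z0 f by (simp add: scalar_prod_minus_distrib[of _ n] algebra_simps)
    moreover have "\<forall>u\<in>U. vCons (- (w' \<bullet> f)) w' \<bullet> u = 0"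
      using separating_form_pivot[OF U e w'(1)] w'U' by (intro in_U) (auto simp: U'_def)
    ultimately show ?thesis using w'(1) by (intro bexI[of _ "vCons (- (w' \<bullet> f)) w'"]) auto
  next
    case False
    then have first_zero: "\<And>b u. vCons b u \<in> U \<Longrightarrow> b = 0"
      using subspace_without_pivot[OF U] by blast
    show ?thesis
    proof (cases "a = 0")
      case True
      then have "z0 \<notin> U'" using Suc.prems(3) z unfolding U'_def by auto
      then obtain w' where w': "w' \<in> carrier_vec n" "w' \<bullet> z0 = 1" and w'U': "\<forall>u\<in>U'. w' \<bullet> u = 0"
        using Suc.IH[OF U' z0] by blast
      have "\<forall>u\<in>U. vCons 0 w' \<bullet> u = 0"
        using first_zero w'U' by (intro in_U) (auto simp: U'_def)
      then show ?thesis using w' z True by (intro bexI[of _ "vCons 0 w'"]) auto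
    next
      case False
      have "\<forall>u\<in>U. vCons (1 / a) (0\<^sub>v n) \<bullet> u = 0"
        using first_zero by (intro in_U) auto
      then show ?thesis using z z0 False by (intro bexI[of _ "vCons (1 / a) (0\<^sub>v n)"]) auto
    qed
  qed
qed

lemma decomposable_by_form_and_vector:
  fixes phi :: "'e \<Rightarrow> 'k::field mat" and f c :: "'v \<Rightarrow> 'k vec"
  assumes rep: "is_rep Vs As tlf hdf d phi"
    and f: "\<And>a. a \<in> Vs \<Longrightarrow> f a \<in> carrier_vec (d a)"
    and c: "\<And>a. a \<in> Vs \<Longrightarrow> c a \<in> carrier_vec (d a)"
    and dual: "\<And>a. a \<in> Vs \<Longrightarrow> f a \<bullet> c a = 1 \<or> f a = 0\<^sub>v (d a) \<and> c a = 0\<^sub>v (d a)"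
    and f_stable: "\<And>g x. g \<in> As \<Longrightarrow> x \<in> carrier_vec (d (tlf g)) \<Longrightarrow> f (tlf g) \<bullet> x = 0
                    \<Longrightarrow> f (hdf g) \<bullet> (phi g *\<^sub>v x) = 0"
    and c_stable: "\<And>g. g \<in> As \<Longrightarrow> phi g *\<^sub>v c (tlf g) \<in> vec_multiples (c (hdf g))"
    and a0: "a0 \<in> Vs" "c a0 \<noteq> 0\<^sub>v (d a0)"
    and a1: "a1 \<in> Vs" "f a1 = 0\<^sub>v (d a1)" "0 < d a1"
  shows "decomposable Vs As tlf hdf d phi"
  unfolding decomposable_def
proof (intro exI conjI ballI)
  fix a assume a: "a \<in> Vs"
  show "is_subspace (d a) (form_kernel (d a) (f a))"
    using is_subspace_form_kernel f[OF a] .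
  show "is_subspace (d a) (vec_multiples (c a))"
    using is_subspace_vec_multiples c[OF a] .
  note complementary = form_kernel_vec_multiples_complementary[OF f[OF a] c[OF a] dual[OF a]]
  show "form_kernel (d a) (f a) \<inter> vec_multiples (c a) = {0\<^sub>v (d a)}"
    using complementary(1) .
  show "\<exists>u\<in>form_kernel (d a) (f a). \<exists>v\<in>vec_multiples (c a). x = u + v"
    if "x \<in> carrier_vec (d a)" for x
    using complementary(2) that by blast
next
  fix g assume g: "g \<in> As"
  then have phi: "phi g \<in> carrier_mat (d (hdf g)) (d (tlf g))" and ends: "tlf g \<in> Vs" "hdf g \<in> Vs"
    using rep by (auto simp: is_rep_def)
  show "phi g *\<^sub>v x \<in> form_kernel (d (hdf g)) (f (hdf g))"
    if "x \<in> form_kernel (d (tlf g)) (f (tlf g))" for x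
    using that f_stable[OF g] phi by (auto simp: form_kernel_def)
  show "phi g *\<^sub>v x \<in> vec_multiples (c (hdf g))" if x_mult: "x \<in> vec_multiples (c (tlf g))" for x
  proof -
    obtain e where x: "x = e \<cdot>\<^sub>v c (tlf g)" using x_mult by (auto simp: vec_multiples_def)
    have "phi g *\<^sub>v x = e \<cdot>\<^sub>v (phi g *\<^sub>v c (tlf g))"
      using x phi c[OF ends(1)] by (simp add: mult_mat_vec)
    then show ?thesis
      using is_subspace_vec_multiples[OF c[OF ends(2)]] c_stable[OF g]
      by (simp add: is_subspace_def)
  qed
next
  have "unit_vec (d a1) 0 \<in> form_kernel (d a1) (f a1)" "unit_vec (d a1) 0 \<noteq> 0\<^sub>v (d a1)"
    using a1 by (auto simp: form_kernel_def vec_eq_iff)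
  then show "\<exists>a\<in>Vs. form_kernel (d a) (f a) \<noteq> {0\<^sub>v (d a)}"
    using a1 by blast
next
  show "\<exists>a\<in>Vs. vec_multiples (c a) \<noteq> {0\<^sub>v (d a)}"
    using a0 self_in_vec_multiples by blast
qed

text \<open>The composite V_(i;j) \<rightarrow> V_(i;m) of the arrows of the i-th leg; it is the identity
  of V_(i;m) whenever j \<le> m.\<close>
fun leg_map :: "(sn_arrow \<Rightarrow> 'k::field mat) \<Rightarrow> (sn_vertex \<Rightarrow> nat) \<Rightarrow> nat \<Rightarrow> nat \<Rightarrow> nat \<Rightarrow> 'k mat"
  where
  "leg_map phi d i m 0 = 1\<^sub>m (d (LV i m))"
| "leg_map phi d i m (Suc j) =
     (if Suc j \<le> m then 1\<^sub>m (d (LV i m)) else leg_map phi d i m j * phi (Leg i (Suc j)))"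

lemma leg_map_self[simp]: "leg_map phi d i m m = 1\<^sub>m (d (LV i m))"
  by (cases m) auto

lemma leg_map_Suc: "m \<le> j \<Longrightarrow> leg_map phi d i m (Suc j) = leg_map phi d i m j * phi (Leg i (Suc j))"
  by simp

locale sn_leg =
  fixes phi :: "sn_arrow \<Rightarrow> 'k::field mat" and d :: "sn_vertex \<Rightarrow> nat" and i S :: nat
  assumes leg_carrier:
    "\<And>j. 1 \<le> j \<Longrightarrow> j \<le> S \<Longrightarrow> phi (Leg i j) \<in> carrier_mat (d (LV i (j - 1))) (d (LV i j))"
begin

lemma leg_map_carrier:
  assumes "m \<le> j" and "j \<le> S"
  shows "leg_map phi d i m j \<in> carrier_mat (d (LV i m)) (d (LV i j))"
  using assms
proof (induction j rule: dec_induct)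
  case (step j)
  then show ?case using leg_carrier[of "Suc j"] by (auto simp: leg_map_Suc)
qed simp

lemma leg_map_trans:
  assumes "m \<le> j" and "j \<le> l" and "l \<le> S"
  shows "leg_map phi d i m l = leg_map phi d i m j * leg_map phi d i j l"
  using assms(2,3)
proof (induction l rule: dec_induct)
  case base
  then show ?case using leg_map_carrier[of m j] assms(1) by simp
next
  case (step l)
  have "leg_map phi d i m (Suc l) = (leg_map phi d i m j * leg_map phi d i j l) * phi (Leg i (Suc l))"
    using step assms(1) by (simp add: leg_map_Suc)
  also have "\<dots> = leg_map phi d i m j * (leg_map phi d i j l * phi (Leg i (Suc l)))"
    using leg_map_carrier[of m j] leg_map_carrier[of j l] leg_carrier[of "Suc l"] step assms(1)
    by (intro assoc_mult_mat) auto
  finally show ?case using step by (simp add: leg_map_Suc)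
qed

lemma leg_map_trans_vec:
  assumes "m \<le> j" and "j \<le> l" and "l \<le> S" and "x \<in> carrier_vec (d (LV i l))"
  shows "leg_map phi d i m l *\<^sub>v x = leg_map phi d i m j *\<^sub>v (leg_map phi d i j l *\<^sub>v x)"
  unfolding leg_map_trans[OF assms(1-3)]
  using assms leg_map_carrier[of m j] leg_map_carrier[of j l] by (intro assoc_mult_mat_vec) auto

lemma leg_map_step:
  assumes "1 \<le> j" and "j \<le> S"
  shows "leg_map phi d i (j - 1) j = phi (Leg i j)"
  using assms leg_carrier[of j] by (cases j) auto

lemma leg_map_pred_vec:
  assumes "m < j" and "j \<le> S" and "x \<in> carrier_vec (d (LV i j))"
  shows "leg_map phi d i m j *\<^sub>v x = leg_map phi d i m (j - 1) *\<^sub>v (phi (Leg i j) *\<^sub>v x)"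
  using leg_map_trans_vec[of m "j - 1" j x] leg_map_step[of j] assms by simp

end

lemma sn_leg_of_rep:
  assumes "is_rep (sn_vertices r k s) (sn_arrows r k s) sn_tail sn_head d phi" and "i \<in> {1..k}"
  shows "sn_leg phi d i (s i)"
proof
  fix j assume "1 \<le> j" "j \<le> s i"
  then have "Leg i j \<in> sn_arrows r k s" using assms(2) by (auto simp: sn_arrows_def)
  then show "phi (Leg i j) \<in> carrier_mat (d (LV i (j - 1))) (d (LV i j))"
    using assms(1) by (auto simp: is_rep_def)
qed

lemma sn_arrow_cases:
  assumes "g \<in> sn_arrows r k s"
  obtains l i where "g = Star l i" "l \<in> {1..r}" "i \<in> {1..k}"
    | i j where "g = Leg i j" "i \<in> {1..k}" "j \<in> {1..s i}"
  using assms by (auto simp: sn_arrows_def)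

text \<open>A string summand on the segment (i;m), ..., (i;t) of a leg is generated by y at (i;t);
  a form w on V_(i;m) that is 1 on the image of y cuts out its complement.\<close>
locale leg_segment = sn_leg phi d i S
  for phi :: "sn_arrow \<Rightarrow> 'k::field mat" and d i S +
  fixes m t :: nat and w y :: "'k vec"
  assumes mt: "m \<le> t" and tS: "t \<le> S"
    and w: "w \<in> carrier_vec (d (LV i m))" and y: "y \<in> carrier_vec (d (LV i t))"
    and wy: "w \<bullet> (leg_map phi d i m t *\<^sub>v y) = 1"
begin

definition seg_form :: "sn_vertex \<Rightarrow> 'k vec" where
  "seg_form a = (case a of
      LV i' j \<Rightarrow> if i' = i \<and> m \<le> j \<and> j \<le> t
        then transpose_mat (leg_map phi d i m j) *\<^sub>v w else 0\<^sub>v (d a)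
    | SV l \<Rightarrow> 0\<^sub>v (d a))"

definition seg_vec :: "sn_vertex \<Rightarrow> 'k vec" where
  "seg_vec a = (case a of
      LV i' j \<Rightarrow> if i' = i \<and> m \<le> j \<and> j \<le> t then leg_map phi d i j t *\<^sub>v y else 0\<^sub>v (d a)
    | SV l \<Rightarrow> 0\<^sub>v (d a))"

lemma seg_form_carrier: "seg_form a \<in> carrier_vec (d a)"
proof (cases a)
  case (LV i' j)
  have "transpose_mat (leg_map phi d i m j) *\<^sub>v w \<in> carrier_vec (d (LV i j))" if "m \<le> j" "j \<le> t"
    using leg_map_carrier[of m j] that tS w by (auto intro!: mult_mat_vec_carrier)
  then show ?thesis using LV by (auto simp: seg_form_def)
qed (simp add: seg_form_def)

lemma seg_vec_carrier: "seg_vec a \<in> carrier_vec (d a)"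
proof (cases a)
  case (LV i' j)
  have "leg_map phi d i j t *\<^sub>v y \<in> carrier_vec (d (LV i j))" if "j \<le> t"
    using leg_map_carrier[of j t] that tS y by (auto intro!: mult_mat_vec_carrier)
  then show ?thesis using LV by (auto simp: seg_vec_def)
qed (simp add: seg_vec_def)

lemma seg_form_apply:
  assumes "m \<le> j" "j \<le> t" "x \<in> carrier_vec (d (LV i j))"
  shows "seg_form (LV i j) \<bullet> x = w \<bullet> (leg_map phi d i m j *\<^sub>v x)"
  using assms transpose_vec_mult_scalar[OF leg_map_carrier[of m j] _ w] tS
  by (simp add: seg_form_def)

lemma seg_form_seg_vec:
  "seg_form a \<bullet> seg_vec a = 1 \<or> seg_form a = 0\<^sub>v (d a) \<and> seg_vec a = 0\<^sub>v (d a)"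
proof (cases "\<exists>j. a = LV i j \<and> m \<le> j \<and> j \<le> t")
  case True
  then obtain j where a: "a = LV i j" "m \<le> j" "j \<le> t" by blast
  then have "seg_form a \<bullet> seg_vec a = w \<bullet> (leg_map phi d i m j *\<^sub>v (leg_map phi d i j t *\<^sub>v y))"
    using seg_form_apply seg_vec_carrier[of a] by (simp add: seg_vec_def)
  also have "\<dots> = 1"
    using leg_map_trans_vec[of m j t y] a tS y wy by simp
  finally show ?thesis by simp
next
  case False
  then show ?thesis by (cases a) (auto simp: seg_form_def seg_vec_def)
qed

lemma seg_form_Leg:
  assumes above: "t < S \<Longrightarrow> \<forall>x\<in>carrier_vec (d (LV i (Suc t))). w \<bullet> (leg_map phi d i m (Suc t) *\<^sub>v x) = 0"
    and j: "1 \<le> j" "j \<le> S" and x: "x \<in> carrier_vec (d (LV i j))"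
    and fx: "seg_form (LV i j) \<bullet> x = 0"
  shows "seg_form (LV i (j - 1)) \<bullet> (phi (Leg i j) *\<^sub>v x) = 0"
proof (cases "m \<le> j - 1 \<and> j - 1 \<le> t")
  case prev_in_segment: True
  have mj: "m < j" using prev_in_segment j by linarith
  then have "seg_form (LV i (j - 1)) \<bullet> (phi (Leg i j) *\<^sub>v x) = w \<bullet> (leg_map phi d i m j *\<^sub>v x)"
    using prev_in_segment j x leg_carrier[of j] seg_form_apply[of "j - 1"] leg_map_pred_vec[of m j x] by simp
  also have "\<dots> = 0"
  proof (cases "j \<le> t")
    case True
    then show ?thesis using seg_form_apply[of j x] fx x mj by simp
  next
    case False
    then have "j = Suc t" using prev_in_segment by linarith
    then show ?thesis using above j x by simp
  qed
  finally show ?thesis .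
next
  case False
  then show ?thesis using leg_carrier[of j] j x by (auto simp: seg_form_def)
qed

lemma seg_vec_Leg:
  assumes below: "0 < m \<Longrightarrow> phi (Leg i m) *\<^sub>v (leg_map phi d i m t *\<^sub>v y) = 0\<^sub>v (d (LV i (m - 1)))"
    and j: "1 \<le> j" "j \<le> S"
  shows "phi (Leg i j) *\<^sub>v seg_vec (LV i j) \<in> vec_multiples (seg_vec (LV i (j - 1)))"
proof -
  consider "m < j" "j \<le> t" | "j = m" | "\<not> (m \<le> j \<and> j \<le> t)"
    by linarith
  then show ?thesis
  proof cases
    case 1
    moreover have "m \<le> j - 1" "j - 1 \<le> t" using 1 by auto
    ultimately have "phi (Leg i j) *\<^sub>v seg_vec (LV i j) = seg_vec (LV i (j - 1))"
      using j tS y leg_map_trans_vec[of "j - 1" j t y] leg_map_step[of j] by (simp add: seg_vec_def)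
    then show ?thesis by (simp add: self_in_vec_multiples)
  next
    case 2
    then have "phi (Leg i j) *\<^sub>v seg_vec (LV i j) = 0\<^sub>v (d (LV i (j - 1)))"
      using below j mt by (simp add: seg_vec_def)
    then show ?thesis using zero_in_vec_multiples[OF seg_vec_carrier] by simp
  next
    case 3
    then have "phi (Leg i j) *\<^sub>v seg_vec (LV i j) = 0\<^sub>v (d (LV i (j - 1)))"
      using leg_carrier[of j] j by (auto simp: seg_vec_def)
    then show ?thesis using zero_in_vec_multiples[OF seg_vec_carrier] by simp
  qed
qed

lemma seg_vec_nonzero: "seg_vec (LV i m) \<noteq> 0\<^sub>v (d (LV i m))"
  using wy w mt by (auto simp: seg_vec_def)

lemma seg_form_arrow:
  assumes rep: "is_rep (sn_vertices r k s) (sn_arrows r k s) sn_tail sn_head d phi" and S: "S = s i"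
    and above: "t < S \<Longrightarrow> \<forall>x\<in>carrier_vec (d (LV i (Suc t))). w \<bullet> (leg_map phi d i m (Suc t) *\<^sub>v x) = 0"
    and stars: "\<And>l x. m = 0 \<Longrightarrow> l \<in> {1..r} \<Longrightarrow> x \<in> carrier_vec (d (SV l))
                  \<Longrightarrow> w \<bullet> (phi (Star l i) *\<^sub>v x) = 0"
    and g: "g \<in> sn_arrows r k s" and x: "x \<in> carrier_vec (d (sn_tail g))"
    and fx: "seg_form (sn_tail g) \<bullet> x = 0"
  shows "seg_form (sn_head g) \<bullet> (phi g *\<^sub>v x) = 0"
proof -
  have phi: "phi g \<in> carrier_mat (d (sn_head g)) (d (sn_tail g))"
    using rep g by (auto simp: is_rep_def)
  from g show ?thesis
  proof (cases rule: sn_arrow_cases)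
    case (1 l i')
    show ?thesis
    proof (cases "i' = i \<and> m = 0")
      case True
      then show ?thesis
        using seg_form_apply[of 0 "phi (Star l i) *\<^sub>v x"] stars[of l x] phi x 1 by simp
    qed (use 1 phi x in \<open>auto simp: seg_form_def\<close>)
  next
    case (2 i' j)
    show ?thesis
    proof (cases "i' = i")
      case True
      then show ?thesis using seg_form_Leg[OF above] 2 x fx S by simp
    qed (use 2 phi x in \<open>auto simp: seg_form_def\<close>)
  qed
qed

lemma seg_vec_arrow:
  assumes rep: "is_rep (sn_vertices r k s) (sn_arrows r k s) sn_tail sn_head d phi" and S: "S = s i"
    and below: "0 < m \<Longrightarrow> phi (Leg i m) *\<^sub>v (leg_map phi d i m t *\<^sub>v y) = 0\<^sub>v (d (LV i (m - 1)))"
    and g: "g \<in> sn_arrows r k s"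
  shows "phi g *\<^sub>v seg_vec (sn_tail g) \<in> vec_multiples (seg_vec (sn_head g))"
proof -
  have "phi g \<in> carrier_mat (d (sn_head g)) (d (sn_tail g))"
    using rep g by (auto simp: is_rep_def)
  then have zero: "phi g *\<^sub>v 0\<^sub>v (d (sn_tail g)) \<in> vec_multiples (seg_vec (sn_head g))"
    using zero_in_vec_multiples[OF seg_vec_carrier] by simp
  from g show ?thesis
  proof (cases rule: sn_arrow_cases)
    case (2 i' j)
    show ?thesis
    proof (cases "i' = i")
      case True
      then show ?thesis using seg_vec_Leg[OF below] 2 S by simp
    qed (use 2 zero in \<open>simp add: seg_vec_def\<close>)
  qed (use zero in \<open>simp add: seg_vec_def\<close>)
qed

end

lemma decomposable_if_leg_segment_splits:
  fixes phi :: "sn_arrow \<Rightarrow> 'k::field mat"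
  assumes rep: "is_rep (sn_vertices r k s) (sn_arrows r k s) sn_tail sn_head d phi"
    and d_SV: "\<And>l. d (SV l) = 1" and r: "1 \<le> r" and i: "i \<in> {1..k}"
    and segment: "leg_segment phi d i (s i) m t w y"
    and above: "t < s i \<Longrightarrow>
      \<forall>x\<in>carrier_vec (d (LV i (Suc t))). w \<bullet> (leg_map phi d i m (Suc t) *\<^sub>v x) = 0"
    and below: "0 < m \<Longrightarrow> phi (Leg i m) *\<^sub>v (leg_map phi d i m t *\<^sub>v y) = 0\<^sub>v (d (LV i (m - 1)))"
    and stars: "\<And>l x. m = 0 \<Longrightarrow> l \<in> {1..r} \<Longrightarrow> x \<in> carrier_vec (d (SV l))
                  \<Longrightarrow> w \<bullet> (phi (Star l i) *\<^sub>v x) = 0"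
  shows "decomposable (sn_vertices r k s) (sn_arrows r k s) sn_tail sn_head d phi"
proof -
  interpret leg_segment phi d i "s i" m t w y by (fact segment)
  show ?thesis
  proof (rule decomposable_by_form_and_vector
      [OF rep seg_form_carrier seg_vec_carrier seg_form_seg_vec, of "LV i m" "SV 1"])
    show "seg_form (sn_head g) \<bullet> (phi g *\<^sub>v x) = 0"
      if "g \<in> sn_arrows r k s" "x \<in> carrier_vec (d (sn_tail g))" "seg_form (sn_tail g) \<bullet> x = 0"
      for g x
      using seg_form_arrow[OF rep refl above stars that] .
    show "phi g *\<^sub>v seg_vec (sn_tail g) \<in> vec_multiples (seg_vec (sn_head g))"
      if "g \<in> sn_arrows r k s" for g
      using seg_vec_arrow[OF rep refl below that] .
    show "LV i m \<in> sn_vertices r k s" "SV 1 \<in> sn_vertices r k s"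
      using i mt tS r by (auto simp: sn_vertices_def)
    show "seg_vec (LV i m) \<noteq> 0\<^sub>v (d (LV i m))" by (fact seg_vec_nonzero)
    show "seg_form (SV 1) = 0\<^sub>v (d (SV 1))" "0 < d (SV 1)"
      using d_SV by (auto simp: seg_form_def)
  qed
qed

lemma mult_mat_vec_not_inj_on:
  fixes M :: "'k::field mat"
  assumes "M \<in> carrier_mat n' n" and "\<not> inj_on (\<lambda>x. M *\<^sub>v x) (carrier_vec n)"
  obtains x where "x \<in> carrier_vec n" "x \<noteq> 0\<^sub>v n" "M *\<^sub>v x = 0\<^sub>v n'"
proof -
  obtain x1 x2 where x: "x1 \<in> carrier_vec n" "x2 \<in> carrier_vec n" "x1 \<noteq> x2"
    and eq: "M *\<^sub>v x1 = M *\<^sub>v x2"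
    using assms(2) unfolding inj_on_def by blast
  have "x1 - x2 \<noteq> 0\<^sub>v n"
  proof
    assume "x1 - x2 = 0\<^sub>v n"
    then have "x1 = x2" using x by (auto simp: vec_eq_iff)
    with x show False by simp
  qed
  moreover have "M *\<^sub>v (x1 - x2) = 0\<^sub>v n'"
    using assms(1) x eq by (simp add: mult_minus_distrib_mat_vec)
  ultimately show thesis using x by (intro that[of "x1 - x2"]) auto
qed

context sn_leg
begin

lemma exists_segment_for_form:
  assumes w: "w \<in> carrier_vec (d (LV i m))" and mS: "m \<le> S"
    and z: "z \<in> carrier_vec (d (LV i m))" "w \<bullet> z \<noteq> 0"
  obtains t y where "leg_segment phi d i S m t w y"
    and "t < S \<Longrightarrow> \<forall>x\<in>carrier_vec (d (LV i (Suc t))). w \<bullet> (leg_map phi d i m (Suc t) *\<^sub>v x) = 0"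
proof -
  define P where "P j \<longleftrightarrow> m \<le> j \<and> j \<le> S \<and>
    (\<exists>x\<in>carrier_vec (d (LV i j)). w \<bullet> (leg_map phi d i m j *\<^sub>v x) \<noteq> 0)" for j
  have "P m" unfolding P_def using z w mS by (intro conjI bexI[of _ z]) auto
  then obtain t where "P t" and t_max: "\<And>j. P j \<Longrightarrow> j \<le> t"
    using Nat.ex_has_greatest_nat[of P m S] unfolding P_def by blast
  then obtain x where mt: "m \<le> t" and tS: "t \<le> S" and x: "x \<in> carrier_vec (d (LV i t))"
    and wx: "w \<bullet> (leg_map phi d i m t *\<^sub>v x) \<noteq> 0"
    unfolding P_def by blast
  define a where "a = w \<bullet> (leg_map phi d i m t *\<^sub>v x)"
  have "w \<bullet> (leg_map phi d i m t *\<^sub>v ((1 / a) \<cdot>\<^sub>v x)) = (1 / a) * a"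
    using leg_map_carrier[of m t] mt tS x w unfolding a_def
    by (simp add: mult_mat_vec scalar_prod_smult_distrib[of _ "d (LV i m)"])
  then have "leg_segment phi d i S m t w ((1 / a) \<cdot>\<^sub>v x)"
    using mt tS w x wx unfolding a_def by unfold_locales auto
  moreover have "\<forall>x'\<in>carrier_vec (d (LV i (Suc t))). w \<bullet> (leg_map phi d i m (Suc t) *\<^sub>v x') = 0"
    if "t < S"
  proof (rule ccontr)
    assume "\<not> (\<forall>x'\<in>carrier_vec (d (LV i (Suc t))). w \<bullet> (leg_map phi d i m (Suc t) *\<^sub>v x') = 0)"
    then have "P (Suc t)" unfolding P_def using that mt by auto
    then show False using t_max by fastforce
  qed
  ultimately show thesis by (rule that)
qed

lemma exists_segment_for_kernel:
  assumes m: "m \<in> {1..S}" and x0: "x0 \<in> carrier_vec (d (LV i m))" "x0 \<noteq> 0\<^sub>v (d (LV i m))"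
    and kill: "phi (Leg i m) *\<^sub>v x0 = 0\<^sub>v (d (LV i (m - 1)))"
  obtains t w y where "leg_segment phi d i S m t w y"
    and "t < S \<Longrightarrow> \<forall>x\<in>carrier_vec (d (LV i (Suc t))). w \<bullet> (leg_map phi d i m (Suc t) *\<^sub>v x) = 0"
    and "phi (Leg i m) *\<^sub>v (leg_map phi d i m t *\<^sub>v y) = 0\<^sub>v (d (LV i (m - 1)))"
proof -
  define Q where "Q t \<longleftrightarrow> m \<le> t \<and> t \<le> S \<and> (\<exists>y\<in>carrier_vec (d (LV i t)).
    leg_map phi d i m t *\<^sub>v y \<noteq> 0\<^sub>v (d (LV i m)) \<and>
    phi (Leg i m) *\<^sub>v (leg_map phi d i m t *\<^sub>v y) = 0\<^sub>v (d (LV i (m - 1))))" for t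
  have "Q m" using x0 kill m unfolding Q_def by auto
  then obtain t where "Q t" and t_max: "\<And>t'. Q t' \<Longrightarrow> t' \<le> t"
    using Nat.ex_has_greatest_nat[of Q m S] unfolding Q_def by blast
  then obtain y where mt: "m \<le> t" and tS: "t \<le> S" and y: "y \<in> carrier_vec (d (LV i t))"
    and z: "leg_map phi d i m t *\<^sub>v y \<noteq> 0\<^sub>v (d (LV i m))"
    and below: "phi (Leg i m) *\<^sub>v (leg_map phi d i m t *\<^sub>v y) = 0\<^sub>v (d (LV i (m - 1)))"
    unfolding Q_def by blast
  let ?z = "leg_map phi d i m t *\<^sub>v y"
  let ?V = "(\<lambda>v. leg_map phi d i m (Suc t) *\<^sub>v v) ` carrier_vec (d (LV i (Suc t)))"
  have z_carrier: "?z \<in> carrier_vec (d (LV i m))"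
    using leg_map_carrier[of m t] mt tS y by simp
  have z_notin: "?z \<notin> ?V" if "t < S"
  proof
    assume "?z \<in> ?V"
    then have "Q (Suc t)" unfolding Q_def using that z below mt by auto
    then show False using t_max by fastforce
  qed
  obtain w where w: "w \<in> carrier_vec (d (LV i m))" "w \<bullet> ?z = 1"
    and above: "t < S \<Longrightarrow> \<forall>u\<in>?V. w \<bullet> u = 0"
  proof (cases "t < S")
    case True
    then have "is_subspace (d (LV i m)) ?V"
      using mt by (intro is_subspace_mat_image leg_map_carrier) auto
    then show thesis using exists_separating_form z_carrier z_notin[OF True] that by blast
  next
    case False
    then show thesis using exists_separating_form[OF is_subspace_zero z_carrier] z that by auto
  qed
  have "leg_segment phi d i S m t w y"
    using mt tS w y by unfold_locales auto
  moreover have "\<forall>x\<in>carrier_vec (d (LV i (Suc t))). w \<bullet> (leg_map phi d i m (Suc t) *\<^sub>v x) = 0"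
    if "t < S"
    using above[OF that] by blast
  ultimately show thesis using below by (rule that)
qed

end

lemma spans_star_images_if_not_decomposable:
  fixes phi :: "sn_arrow \<Rightarrow> 'k::field mat"
  assumes rep: "is_rep (sn_vertices r k s) (sn_arrows r k s) sn_tail sn_head d phi"
    and d_SV: "\<And>l. d (SV l) = 1" and r: "1 \<le> r" and i: "i \<in> {1..k}"
    and not_dec: "\<not> decomposable (sn_vertices r k s) (sn_arrows r k s) sn_tail sn_head d phi"
  shows "spans (d (LV i 0)) {(\<lambda>x. phi (Star l i) *\<^sub>v x) ` carrier_vec 1 | l. l \<in> {1..r}}"
  unfolding spans_def
proof (intro allI impI)
  interpret sn_leg phi d i "s i" using sn_leg_of_rep[OF rep i] .
  fix U assume U: "is_subspace (d (LV i 0)) U \<and>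
    \<Union>{(\<lambda>x. phi (Star l i) *\<^sub>v x) ` carrier_vec 1 | l. l \<in> {1..r}} \<subseteq> U"
  show "carrier_vec (d (LV i 0)) \<subseteq> U"
  proof (rule ccontr)
    assume "\<not> carrier_vec (d (LV i 0)) \<subseteq> U"
    then obtain z where z: "z \<in> carrier_vec (d (LV i 0))" "z \<notin> U" by blast
    then obtain w where w: "w \<in> carrier_vec (d (LV i 0))" "w \<bullet> z = 1" and wU: "\<forall>u\<in>U. w \<bullet> u = 0"
      using exists_separating_form[OF conjunct1[OF U]] by blast
    have stars: "w \<bullet> (phi (Star l i) *\<^sub>v x) = 0" if "l \<in> {1..r}" "x \<in> carrier_vec (d (SV l))" for l x
    proof -
      have "x \<in> carrier_vec 1" using that(2) d_SV by simp
      then have "phi (Star l i) *\<^sub>v x \<in> \<Union>{(\<lambda>x. phi (Star l i) *\<^sub>v x) ` carrier_vec 1 | l. l \<in> {1..r}}"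
        using that(1) by blast
      then show ?thesis using U wU by blast
    qed
    have "w \<bullet> z \<noteq> 0" using w by simp
    then have "decomposable (sn_vertices r k s) (sn_arrows r k s) sn_tail sn_head d phi"
    proof (rule exists_segment_for_form[OF w(1) le0 z(1)])
      fix t y assume "leg_segment phi d i (s i) 0 t w y"
        and "t < s i \<Longrightarrow> \<forall>x\<in>carrier_vec (d (LV i (Suc t))). w \<bullet> (leg_map phi d i 0 (Suc t) *\<^sub>v x) = 0"
      then show ?thesis using stars by (intro decomposable_if_leg_segment_splits[OF rep d_SV r i]) auto
    qed
    then show False using not_dec by contradiction
  qed
qed

lemma leg_maps_injective_if_not_decomposable:
  fixes phi :: "sn_arrow \<Rightarrow> 'k::field mat"
  assumes rep: "is_rep (sn_vertices r k s) (sn_arrows r k s) sn_tail sn_head d phi"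
    and d_SV: "\<And>l. d (SV l) = 1" and r: "1 \<le> r" and i: "i \<in> {1..k}" and m: "m \<in> {1..s i}"
    and not_dec: "\<not> decomposable (sn_vertices r k s) (sn_arrows r k s) sn_tail sn_head d phi"
  shows "inj_on (\<lambda>x. phi (Leg i m) *\<^sub>v x) (carrier_vec (d (LV i m)))"
proof (rule ccontr)
  interpret sn_leg phi d i "s i" using sn_leg_of_rep[OF rep i] .
  assume "\<not> inj_on (\<lambda>x. phi (Leg i m) *\<^sub>v x) (carrier_vec (d (LV i m)))"
  moreover have "phi (Leg i m) \<in> carrier_mat (d (LV i (m - 1))) (d (LV i m))"
    using leg_carrier m by simp
  ultimately obtain x0 where x0: "x0 \<in> carrier_vec (d (LV i m))" "x0 \<noteq> 0\<^sub>v (d (LV i m))"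
    "phi (Leg i m) *\<^sub>v x0 = 0\<^sub>v (d (LV i (m - 1)))"
    using mult_mat_vec_not_inj_on by metis
  have "decomposable (sn_vertices r k s) (sn_arrows r k s) sn_tail sn_head d phi"
  proof (rule exists_segment_for_kernel[OF m x0])
    fix t w y assume "leg_segment phi d i (s i) m t w y"
      and "t < s i \<Longrightarrow> \<forall>x\<in>carrier_vec (d (LV i (Suc t))). w \<bullet> (leg_map phi d i m (Suc t) *\<^sub>v x) = 0"
      and "phi (Leg i m) *\<^sub>v (leg_map phi d i m t *\<^sub>v y) = 0\<^sub>v (d (LV i (m - 1)))"
    then show ?thesis using m by (intro decomposable_if_leg_segment_splits[OF rep d_SV r i]) auto
  qed
  then show False using not_dec by contradiction
qed

theorem proposition3p8:
  fixes r k :: nat and s :: "nat \<Rightarrow> nat" and mu :: "nat \<Rightarrow> nat \<Rightarrow> nat"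
    and phi :: "sn_arrow \<Rightarrow> 'k::field mat"
  assumes "r \<ge> 1" and "k \<ge> 1"
    and partition: "\<forall>i\<in>{1..k}. \<forall>f\<in>{1..s i}. mu i (f + 1) \<le> mu i f"
    and nonzero: "\<forall>i\<in>{1..k}. psize mu s i > 0"
    and bound: "\<forall>i\<in>{1..k}. r \<ge> psize mu s i + mu i 1"
    and rep: "is_rep (sn_vertices r k s) (sn_arrows r k s) sn_tail sn_head (dimvec mu s) phi"
    and indec: "indecomposable (sn_vertices r k s) (sn_arrows r k s) sn_tail sn_head (dimvec mu s) phi"
  shows "(\<forall>i\<in>{1..k}. \<forall>j\<in>{1..s i}.
            inj_on (\<lambda>x. phi (Leg i j) *\<^sub>v x) (carrier_vec (dimvec mu s (LV i j))))
       \<and> (\<forall>i\<in>{1..k}. spans (dimvec mu s (LV i 0))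
            {(\<lambda>x. phi (Star l i) *\<^sub>v x) ` carrier_vec 1 | l. l \<in> {1..r}})"
proof -
  have not_dec: "\<not> decomposable (sn_vertices r k s) (sn_arrows r k s) sn_tail sn_head (dimvec mu s) phi"
    using indec by (simp add: indecomposable_def)
  have d_SV: "\<And>l. dimvec mu s (SV l) = 1" by simp
  show ?thesis
    using leg_maps_injective_if_not_decomposable[OF rep d_SV \<open>r \<ge> 1\<close> _ _ not_dec]
      spans_star_images_if_not_decomposable[OF rep d_SV \<open>r \<ge> 1\<close> _ not_dec]
    by blast
qed

end
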